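(* Let $V$ be a non-empty set with a reflexive and symmetric relation $R$ satisfying the two axioms stated in the context, and let $\mathcal{G}$ be its exchange graph. If for every face $\mathcal{F}$ of $\mathcal{G}$ there exists a projection $P:\mathcal{G}\to\mathcal{F}$, then $\mathcal{G}$ has the non-leaving-face property.
   Context: Elements $x,y\in V$ are called compatible if $(x,y)\in R$. The axioms are: (i) all maximal subsets of pairwise compatible elements of $V$ are finite and have the same cardinality $n$; these maximal subsets are called clusters; (ii) every subset of $n-1$ pairwise compatible elements is contained in exactly two clusters. The exchange graph $\mathcal{G}$ has the clusters as vertices, two clusters being joined by an edge iff their intersection has cardinality $n-1$ ($\mathcal{G}$ need not be connected). For a set $U$ of pairwise compatible elements, the face $\mathcal{F}_U$ is the full subgraph of $\mathcal{G}$ whose vertices are exactly the clusters containing $U$. A geodesic between two vertices is a path between them of minimal length. $\mathcal{G}$ has the non-leaving-face property if every geodesic connecting two vertices of $\mathcal{G}$ lies in the minimal face containing both vertices. A projection onto a face $\mathcal{F}$ is a map $P$ from the vertices of $\mathcal{G}$ to the vertices of $\mathcal{F}$ such that: (P2) $P(v)=v$ for every vertex $v$ of $\mathcal{F}$; (P3) if $v,w$ are joined by an edge of $\mathcal{G}$, then either $P(v)=P(w)$ or $P(v),P(w)$ are joined by an edge of $\mathcal{F}$; (P4) if $v,w$ are joined by an edge of $\mathcal{G}$ with $v\in\mathcal{F}$ and $w\notin\mathcal{F}$, then $P(v)=P(w)$. *)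

theory Defs
  imports Main
begin

definition pw_compat :: "'a set \<Rightarrow> ('a \<times> 'a) set \<Rightarrow> 'a set \<Rightarrow> bool" where
  "pw_compat V R U \<longleftrightarrow> U \<subseteq> V \<and> (\<forall>x\<in>U. \<forall>y\<in>U. (x, y) \<in> R)"

definition is_cluster :: "'a set \<Rightarrow> ('a \<times> 'a) set \<Rightarrow> 'a set \<Rightarrow> bool" where
  "is_cluster V R C \<longleftrightarrow> pw_compat V R C \<and> (\<forall>U. pw_compat V R U \<and> C \<subseteq> U \<longrightarrow> U = C)"

definition clusters :: "'a set \<Rightarrow> ('a \<times> 'a) set \<Rightarrow> 'a set set" where
  "clusters V R = {C. is_cluster V R C}"

definition cluster_axioms :: "'a set \<Rightarrow> ('a \<times> 'a) set \<Rightarrow> nat \<Rightarrow> bool" where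
  "cluster_axioms V R n \<longleftrightarrow>
     (\<forall>C \<in> clusters V R. finite C \<and> card C = n) \<and>
     (\<forall>U. pw_compat V R U \<and> finite U \<and> card U = n - 1 \<longrightarrow>
          card {C \<in> clusters V R. U \<subseteq> C} = 2)"

definition eg_edge :: "'a set \<Rightarrow> ('a \<times> 'a) set \<Rightarrow> nat \<Rightarrow> 'a set \<Rightarrow> 'a set \<Rightarrow> bool" where
  "eg_edge V R n C D \<longleftrightarrow> C \<in> clusters V R \<and> D \<in> clusters V R \<and> card (C \<inter> D) = n - 1"

text \<open>Vertex set of the face F_U (the face is the full subgraph on these vertices).\<close>
definition face :: "'a set \<Rightarrow> ('a \<times> 'a) set \<Rightarrow> 'a set \<Rightarrow> 'a set set" where
  "face V R U = {C \<in> clusters V R. U \<subseteq> C}"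

definition is_face :: "'a set \<Rightarrow> ('a \<times> 'a) set \<Rightarrow> 'a set set \<Rightarrow> bool" where
  "is_face V R F \<longleftrightarrow> (\<exists>U. pw_compat V R U \<and> F = face V R U)"

text \<open>Paths in the exchange graph as lists of vertices; length = number of edges.\<close>
definition eg_path :: "'a set \<Rightarrow> ('a \<times> 'a) set \<Rightarrow> nat \<Rightarrow> 'a set list \<Rightarrow> 'a set \<Rightarrow> 'a set \<Rightarrow> bool" where
  "eg_path V R n p v w \<longleftrightarrow> p \<noteq> [] \<and> hd p = v \<and> last p = w \<and>
     set p \<subseteq> clusters V R \<and>
     (\<forall>i. Suc i < length p \<longrightarrow> eg_edge V R n (p ! i) (p ! Suc i))"

definition geodesic :: "'a set \<Rightarrow> ('a \<times> 'a) set \<Rightarrow> nat \<Rightarrow> 'a set list \<Rightarrow> 'a set \<Rightarrow> 'a set \<Rightarrow> bool" where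
  "geodesic V R n p v w \<longleftrightarrow> eg_path V R n p v w \<and>
     (\<forall>q. eg_path V R n q v w \<longrightarrow> length p \<le> length q)"

definition minimal_face_containing :: "'a set \<Rightarrow> ('a \<times> 'a) set \<Rightarrow> 'a set set \<Rightarrow> 'a set \<Rightarrow> 'a set \<Rightarrow> bool" where
  "minimal_face_containing V R F v w \<longleftrightarrow> is_face V R F \<and> v \<in> F \<and> w \<in> F \<and>
     (\<forall>F'. is_face V R F' \<and> v \<in> F' \<and> w \<in> F' \<longrightarrow> F \<subseteq> F')"

definition non_leaving_face :: "'a set \<Rightarrow> ('a \<times> 'a) set \<Rightarrow> nat \<Rightarrow> bool" where
  "non_leaving_face V R n \<longleftrightarrow>
     (\<forall>v \<in> clusters V R. \<forall>w \<in> clusters V R. \<forall>p F.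
        geodesic V R n p v w \<and> minimal_face_containing V R F v w \<longrightarrow> set p \<subseteq> F)"

text \<open>Projection onto a face F (given by its vertex set), conditions (P2)-(P4).\<close>
definition is_projection :: "'a set \<Rightarrow> ('a \<times> 'a) set \<Rightarrow> nat \<Rightarrow> 'a set set \<Rightarrow> ('a set \<Rightarrow> 'a set) \<Rightarrow> bool" where
  "is_projection V R n F P \<longleftrightarrow>
     (\<forall>v \<in> clusters V R. P v \<in> F) \<and>
     (\<forall>v \<in> F. P v = v) \<and>
     (\<forall>v w. eg_edge V R n v w \<longrightarrow> P v = P w \<or> eg_edge V R n (P v) (P w)) \<and>
     (\<forall>v w. eg_edge V R n v w \<and> v \<in> F \<and> w \<notin> F \<longrightarrow> P v = P w)"

end

theory Submission
  imports Defs
begin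

text \<open>
  Let \<open>F\<close> be a face containing the endpoints of a geodesic \<open>p\<close> and \<open>P\<close> a projection onto \<open>F\<close>.
  By (P3), applying \<open>P\<close> to \<open>p\<close> and deleting adjacent repetitions gives a path in \<open>F\<close> between
  the same endpoints (they are fixed by (P2)) that is no longer than \<open>p\<close>. If \<open>p\<close> left \<open>F\<close>, it
  would contain an edge from \<open>F\<close> to its complement, which (P4) collapses to a single vertex;
  the image path would then be strictly shorter than the geodesic.
\<close>

lemma successively_remdups_adj_reflclp:
  assumes "successively (\<lambda>x y. x = y \<or> E x y) xs"
  shows "successively E (remdups_adj xs)"
  using successively_remdups_adjI[OF assms] distinct_adj_remdups_adj[of xs]
  unfolding distinct_adj_def successively_conv_nth by blast

lemma set_subset_if_successively_stays:
  assumes "successively (\<lambda>x y. x \<in> A \<longrightarrow> y \<in> A) xs" "xs \<noteq> []" "hd xs \<in> A"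
  shows "set xs \<subseteq> A"
  using assms by (induction xs rule: induct_list012) auto

lemma eg_path_iff_successively:
  "eg_path V R n p v w \<longleftrightarrow>
     p \<noteq> [] \<and> hd p = v \<and> last p = w \<and> set p \<subseteq> clusters V R \<and> successively (eg_edge V R n) p"
  unfolding eg_path_def successively_conv_nth by blast

lemma face_subset_clusters: "is_face V R F \<Longrightarrow> F \<subseteq> clusters V R"
  unfolding is_face_def face_def by auto

lemma eg_path_projection:
  assumes "is_face V R F" "is_projection V R n F P" "eg_path V R n p v w"
  shows "eg_path V R n (remdups_adj (map P p)) (P v) (P w)"
proof -
  have "successively (eg_edge V R n) p"
    using assms(3) by (simp add: eg_path_iff_successively)
  then have "successively (\<lambda>x y. P x = P y \<or> eg_edge V R n (P x) (P y)) p"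
    by (rule successively_mono) (use assms(2) in \<open>simp add: is_projection_def\<close>)
  then have "successively (eg_edge V R n) (remdups_adj (map P p))"
    by (intro successively_remdups_adj_reflclp) (simp add: successively_map)
  moreover have "P ` set p \<subseteq> clusters V R"
    using assms face_subset_clusters[OF assms(1)]
    unfolding is_projection_def eg_path_iff_successively by blast
  ultimately show ?thesis
    using assms(3) by (simp add: eg_path_iff_successively hd_map last_map)
qed

lemma length_projection_of_exiting_path:
  assumes "is_projection V R n F P" "eg_path V R n p v w" "v \<in> F" "\<not> set p \<subseteq> F"
  shows "length (remdups_adj (map P p)) < length p"
proof -
  have "p \<noteq> []" "hd p \<in> F"
    using assms(2,3) unfolding eg_path_def by auto
  then have "\<not> successively (\<lambda>x y. x \<in> F \<longrightarrow> y \<in> F) p"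
    using assms(4) set_subset_if_successively_stays by blast
  then obtain i where i: "Suc i < length p" "p ! i \<in> F" "p ! Suc i \<notin> F"
    unfolding successively_conv_nth by blast
  moreover have "eg_edge V R n (p ! i) (p ! Suc i)"
    using assms(2) i(1) unfolding eg_path_def by blast
  ultimately have "P (p ! i) = P (p ! Suc i)"
    using assms(1) unfolding is_projection_def by blast
  then have "\<not> distinct_adj (map P p)"
    using i(1) by (auto simp: distinct_adj_conv_nth)
  then have "length (remdups_adj (map P p)) \<noteq> length (map P p)"
    by (simp add: distinct_adj_conv_length_remdups_adj)
  then show ?thesis
    using remdups_adj_length[of "map P p"] by simp
qed

lemma geodesic_subset_face:
  assumes "is_face V R F" "is_projection V R n F P"
    and "geodesic V R n p v w" "v \<in> F" "w \<in> F"
  shows "set p \<subseteq> F"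
proof (rule ccontr)
  assume exits: "\<not> set p \<subseteq> F"
  have fixed: "P v = v" "P w = w"
    using assms(2,4,5) unfolding is_projection_def by auto
  have path: "eg_path V R n p v w" and shortest: "\<And>q. eg_path V R n q v w \<Longrightarrow> length p \<le> length q"
    using assms(3) unfolding geodesic_def by auto
  have "eg_path V R n (remdups_adj (map P p)) v w"
    using eg_path_projection[OF assms(1,2) path] fixed by simp
  moreover have "length (remdups_adj (map P p)) < length p"
    using length_projection_of_exiting_path[OF assms(2) path assms(4) exits] .
  ultimately show False
    using shortest by fastforce
qed

theorem lemma3p3:
  fixes V :: "'a set" and R :: "('a \<times> 'a) set" and n :: nat
  assumes "V \<noteq> {}"
    and "refl_on V R" and "sym R"
    and "cluster_axioms V R n"
    and "\<forall>F. is_face V R F \<longrightarrow> (\<exists>P. is_projection V R n F P)"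
  shows "non_leaving_face V R n"
  unfolding non_leaving_face_def
proof (intro ballI allI impI)
  fix v w p F
  assume "geodesic V R n p v w \<and> minimal_face_containing V R F v w"
  then have geo: "geodesic V R n p v w" and face: "is_face V R F" "v \<in> F" "w \<in> F"
    unfolding minimal_face_containing_def by auto
  obtain P where "is_projection V R n F P"
    using assms(5) face(1) by blast
  then show "set p \<subseteq> F"
    using geodesic_subset_face[OF face(1) _ geo face(2,3)] by blast
qed

end
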